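(* Let $K=\mathsf{SU}(3)$, let $\Delta=\mathrm{Tr}(K)\subseteq\mathbb{C}$, and let $N\subseteq K$ be the set of generic elements. Then $\mathrm{Tr}(N)$ is conull in $\Delta$ (its complement in $\Delta$ has Lebesgue measure zero).
   Context: An element $a\in K$ is generic if it is regular (its centralizer $K_a=\{g\in K:gag^{-1}=a\}$ is a maximal torus) and the cyclic group $\langle a\rangle$ is dense in $K_a$. *)

theory Defs
  imports "HOL-Analysis.Analysis"
begin

type_synonym cmat3 = "complex^3^3"

text \<open>Conjugate transpose; for unitary matrices this is the group inverse.\<close>
definition ctrans :: "cmat3 \<Rightarrow> cmat3" where
  "ctrans A = (\<chi> i j. cnj (A $ j $ i))"

definition SU3 :: "cmat3 set" where
  "SU3 = {A. ctrans A ** A = mat 1 \<and> A ** ctrans A = mat 1 \<and> det A = 1}"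

definition centralizer :: "cmat3 \<Rightarrow> cmat3 set" where
  "centralizer a = {g \<in> SU3. g ** a ** ctrans g = a}"

text \<open>A torus of K: a compact connected abelian subgroup of K
  (closed subgroups of Lie groups are Lie groups; compact connected abelian
  Lie groups are tori).\<close>
definition is_torus :: "cmat3 set \<Rightarrow> bool" where
  "is_torus T \<longleftrightarrow> T \<subseteq> SU3 \<and> mat 1 \<in> T \<and>
     (\<forall>x\<in>T. \<forall>y\<in>T. x ** y \<in> T) \<and> (\<forall>x\<in>T. ctrans x \<in> T) \<and>
     (\<forall>x\<in>T. \<forall>y\<in>T. x ** y = y ** x) \<and> compact T \<and> connected T"

definition is_maximal_torus :: "cmat3 set \<Rightarrow> bool" where
  "is_maximal_torus T \<longleftrightarrow> is_torus T \<and> (\<forall>S. is_torus S \<and> T \<subseteq> S \<longrightarrow> S = T)"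

definition mpow :: "cmat3 \<Rightarrow> nat \<Rightarrow> cmat3" where
  "mpow a n = ((\<lambda>x. a ** x) ^^ n) (mat 1)"

definition cyclic_gen :: "cmat3 \<Rightarrow> cmat3 set" where
  "cyclic_gen a = range (mpow a) \<union> range (mpow (ctrans a))"

definition regular :: "cmat3 \<Rightarrow> bool" where
  "regular a \<longleftrightarrow> is_maximal_torus (centralizer a)"

definition generic :: "cmat3 \<Rightarrow> bool" where
  "generic a \<longleftrightarrow> a \<in> SU3 \<and> regular a \<and> centralizer a \<subseteq> closure (cyclic_gen a)"

end

theory Submission
  imports Defs "HOL-Computational_Algebra.Fundamental_Theorem_Algebra"
begin

(*
  Every A in SU(3) has unimodular eigenvalues with product det A = 1, hence the same trace as
  an element torus_elem x y = diag(e^ix, e^iy, e^-i(x+y)) of the diagonal torus T.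
  If 1, x/2pi, y/2pi are linearly independent over the rationals, the eigenvalues of
  torus_elem x y are distinct, so its centralizer is T, a maximal torus, and by Kronecker's
  theorem its powers are dense in T: torus_elem x y is generic. All other angle pairs lie on
  countably many lines in R^2, and the smooth map (x, y) -> trace (torus_elem x y) from R^2
  to C sends null sets to null sets.
*)

section \<open>Diagonal matrices and the diagonal torus\<close>

definition diag3 :: "(3 \<Rightarrow> complex) \<Rightarrow> cmat3" where
  "diag3 d = (\<chi> i j. if i = j then d i else 0)"

lemma diag3_nth [simp]: "diag3 d $ i $ j = (if i = j then d i else 0)"
  by (simp add: diag3_def)

lemma diag3_inject: "diag3 d = diag3 e \<longleftrightarrow> d = e"
  by (metis diag3_nth ext)

lemma diag3_mult: "diag3 d ** diag3 e = diag3 (\<lambda>i. d i * e i)"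
  by (simp add: vec_eq_iff matrix_matrix_mult_def sum_3 forall_3)

lemma ctrans_diag3: "ctrans (diag3 d) = diag3 (\<lambda>i. cnj (d i))"
  by (simp add: vec_eq_iff ctrans_def)

lemma mat_1_eq_diag3: "mat 1 = diag3 (\<lambda>_. 1)"
  by (simp add: vec_eq_iff mat_def)

lemma trace_diag3: "trace (diag3 d) = d 1 + d 2 + d 3"
  by (simp add: trace_def sum_3)

lemma cnj_mult_self_eq_1_iff: "cnj z * z = 1 \<longleftrightarrow> cmod z = 1"
proof -
  have "cnj z * z = of_real ((cmod z)\<^sup>2)"
    by (metis complex_norm_square mult.commute)
  then have "cnj z * z = 1 \<longleftrightarrow> (cmod z)\<^sup>2 = 1"
    by (metis of_real_eq_1_iff)
  then show ?thesis
    using norm_ge_zero [of z] by (auto simp: power2_eq_1_iff)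
qed

lemma diag3_in_SU3_iff: "diag3 d \<in> SU3 \<longleftrightarrow> (\<forall>i. cmod (d i) = 1) \<and> d 1 * d 2 * d 3 = 1"
proof -
  have "diag3 (\<lambda>i. cnj (d i) * d i) = mat 1 \<longleftrightarrow> (\<forall>i. cmod (d i) = 1)"
    by (simp add: mat_1_eq_diag3 diag3_inject fun_eq_iff cnj_mult_self_eq_1_iff)
  then show ?thesis
    by (simp add: SU3_def ctrans_diag3 diag3_mult det_3 mult.commute)
qed

definition diag_torus :: "cmat3 set" where
  "diag_torus = SU3 \<inter> range diag3"

definition torus_angles :: "real \<Rightarrow> real \<Rightarrow> 3 \<Rightarrow> real" where
  "torus_angles x y i = (if i = 1 then x else if i = 2 then y else - (x + y))"

lemma torus_angles_simps [simp]:
  "torus_angles x y 1 = x" "torus_angles x y 2 = y" "torus_angles x y 3 = - (x + y)"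
  by (simp_all add: torus_angles_def)

definition torus_elem :: "real \<Rightarrow> real \<Rightarrow> cmat3" where
  "torus_elem x y = diag3 (\<lambda>i. cis (torus_angles x y i))"

lemma torus_elem_in_diag_torus: "torus_elem x y \<in> diag_torus"
  by (simp add: diag_torus_def torus_elem_def diag3_in_SU3_iff cis_mult)

lemma torus_elem_mult: "torus_elem x y ** torus_elem x' y' = torus_elem (x + x') (y + y')"
  by (simp add: torus_elem_def diag3_mult diag3_inject fun_eq_iff forall_3 cis_mult)
    (simp add: algebra_simps)

lemma ctrans_torus_elem: "ctrans (torus_elem x y) = torus_elem (- x) (- y)"
  by (simp add: torus_elem_def ctrans_diag3 diag3_inject fun_eq_iff forall_3 cis_cnj)

lemma torus_elem_zero: "torus_elem 0 0 = mat 1"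
  by (simp add: torus_elem_def mat_1_eq_diag3 diag3_inject fun_eq_iff forall_3)

lemma torus_elem_periodic:
  "torus_elem (x + 2 * pi * of_int m) (y + 2 * pi * of_int n) = torus_elem x y"
proof -
  have cis_periodic: "cis (t + 2 * pi * of_int k) = cis t" for t and k :: int
    by (simp flip: cis_mult)
  have "- (x + 2 * pi * of_int m + (y + 2 * pi * of_int n)) =
      - (x + y) + 2 * pi * of_int (- (m + n))"
    by (simp add: algebra_simps)
  then show ?thesis
    by (simp only: torus_elem_def diag3_inject fun_eq_iff forall_3 torus_angles_simps cis_periodic)
qed

lemma trace_torus_elem: "trace (torus_elem x y) = cis x + cis y + cis (- (x + y))"
  by (simp add: torus_elem_def trace_diag3)

lemma continuous_on_torus_elem: "continuous_on UNIV (\<lambda>(x, y). torus_elem x y)"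
proof -
  have angle: "continuous_on UNIV (\<lambda>p::real \<times> real. torus_angles (fst p) (snd p) i)" for i
    using exhaust_3 [of i] by (auto intro!: continuous_intros)
  show ?thesis
    unfolding torus_elem_def diag3_def case_prod_beta
  proof (intro continuous_on_vec_lambda)
    fix i j :: 3
    show "continuous_on UNIV (\<lambda>p. if i = j then cis (torus_angles (fst p) (snd p) i) else 0)"
      by (cases "i = j") (auto intro!: continuous_intros angle)
  qed
qed

lemma diag_torus_eq_torus_elem_image:
  "diag_torus = (\<lambda>(x, y). torus_elem x y) ` ({-pi..pi} \<times> {-pi..pi})"
proof
  show "diag_torus \<subseteq> (\<lambda>(x, y). torus_elem x y) ` ({-pi..pi} \<times> {-pi..pi})"
  proof
    fix D assume "D \<in> diag_torus"
    then obtain d where D: "D = diag3 d" and unit: "\<And>i. cmod (d i) = 1"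
      and det: "d 1 * d 2 * d 3 = 1"
      by (auto simp: diag_torus_def diag3_in_SU3_iff)
    have cis_Arg: "cis (Arg (d i)) = d i" for i
    proof -
      have "d i \<noteq> 0"
        using unit [of i] by auto
      then show ?thesis
        by (simp add: cis_Arg sgn_eq unit)
    qed
    have "d 1 \<noteq> 0" "d 2 \<noteq> 0"
      using unit [of 1] unit [of 2] by auto
    with det have "d 3 = inverse (d 1 * d 2)"
      by (simp add: field_simps ac_simps)
    also have "\<dots> = cis (- (Arg (d 1) + Arg (d 2)))"
      by (simp only: cis_inverse [symmetric] cis_mult [symmetric] cis_Arg)
    finally have "d = (\<lambda>i. cis (torus_angles (Arg (d 1)) (Arg (d 2)) i))"
      by (simp add: fun_eq_iff forall_3 cis_Arg)
    then have "D = torus_elem (Arg (d 1)) (Arg (d 2))"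
      by (simp add: D torus_elem_def)
    moreover have "Arg (d i) \<in> {-pi..pi}" for i
      using Arg_bounded [of "d i"] by auto
    ultimately show "D \<in> (\<lambda>(x, y). torus_elem x y) ` ({-pi..pi} \<times> {-pi..pi})"
      by auto
  qed
qed (auto simp: torus_elem_in_diag_torus)

lemma range_torus_elem: "range (\<lambda>(x, y). torus_elem x y) = diag_torus"
proof
  show "diag_torus \<subseteq> range (\<lambda>(x, y). torus_elem x y)"
    unfolding diag_torus_eq_torus_elem_image by (rule image_mono) simp
qed (auto simp: torus_elem_in_diag_torus)

lemma is_torus_diag_torus: "is_torus diag_torus"
  unfolding is_torus_def
proof (intro conjI ballI)
  show "diag_torus \<subseteq> SU3"
    by (simp add: diag_torus_def)
  show "mat 1 \<in> diag_torus"
    by (metis torus_elem_zero torus_elem_in_diag_torus)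
  fix A B assume "A \<in> diag_torus" "B \<in> diag_torus"
  then obtain a b a' b' where A: "A = torus_elem a b" and B: "B = torus_elem a' b'"
    unfolding range_torus_elem [symmetric] by auto
  show "ctrans A \<in> diag_torus"
    by (simp add: A ctrans_torus_elem torus_elem_in_diag_torus)
  show "A ** B \<in> diag_torus"
    by (simp add: A B torus_elem_mult torus_elem_in_diag_torus)
  show "A ** B = B ** A"
    by (simp add: A B torus_elem_mult add.commute)
next
  show "compact diag_torus"
    unfolding diag_torus_eq_torus_elem_image
    by (intro compact_continuous_image continuous_on_subset [OF continuous_on_torus_elem])
      (auto intro: compact_Times)
  show "connected diag_torus"
    unfolding range_torus_elem [symmetric]
    by (rule connected_continuous_image [OF continuous_on_torus_elem connected_UNIV])
qed

lemma mult_diag3_nth: "(A ** diag3 d) $ i $ j = A $ i $ j * d j"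
  using exhaust_3 [of j] by (auto simp: matrix_matrix_mult_def sum_3)

lemma diag3_mult_nth: "(diag3 d ** A) $ i $ j = d i * A $ i $ j"
  using exhaust_3 [of i] by (auto simp: matrix_matrix_mult_def sum_3)

lemma commute_diag3_imp_diagonal:
  assumes comm: "A ** diag3 d = diag3 d ** A" and "inj d"
  shows "A = diag3 (\<lambda>i. A $ i $ i)"
proof -
  have "A $ i $ j = 0" if "i \<noteq> j" for i j
  proof -
    have "A $ i $ j * (d j - d i) = 0"
      using arg_cong [OF comm, of "\<lambda>M. M $ i $ j"]
      by (simp add: mult_diag3_nth diag3_mult_nth algebra_simps)
    moreover have "d j \<noteq> d i"
      using \<open>inj d\<close> that by (auto dest: injD)
    ultimately show ?thesis
      by simp
  qed
  then show ?thesis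
    by (simp add: vec_eq_iff)
qed

lemma SU3_conj_eq_iff_commute:
  assumes "g \<in> SU3"
  shows "g ** D ** ctrans g = D \<longleftrightarrow> g ** D = D ** g"
proof
  assume "g ** D ** ctrans g = D"
  then have "g ** D ** (ctrans g ** g) = D ** g"
    by (simp add: matrix_mul_assoc)
  then show "g ** D = D ** g"
    using assms by (simp add: SU3_def)
next
  assume "g ** D = D ** g"
  then have "g ** D ** ctrans g = D ** (g ** ctrans g)"
    by (simp add: matrix_mul_assoc)
  then show "g ** D ** ctrans g = D"
    using assms by (simp add: SU3_def)
qed

lemma centralizer_diag3:
  assumes "inj d"
  shows "centralizer (diag3 d) = diag_torus"
proof
  show "centralizer (diag3 d) \<subseteq> diag_torus"
  proof
    fix g assume "g \<in> centralizer (diag3 d)"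
    then have "g \<in> SU3" and "g ** diag3 d = diag3 d ** g"
      by (auto simp: centralizer_def SU3_conj_eq_iff_commute)
    then show "g \<in> diag_torus"
      using commute_diag3_imp_diagonal [OF _ assms] by (auto simp: diag_torus_def)
  qed
  show "diag_torus \<subseteq> centralizer (diag3 d)"
  proof
    fix g assume "g \<in> diag_torus"
    then obtain e where "g \<in> SU3" and g: "g = diag3 e"
      by (auto simp: diag_torus_def)
    moreover have "g ** diag3 d = diag3 d ** g"
      by (simp add: g diag3_mult mult.commute)
    ultimately show "g \<in> centralizer (diag3 d)"
      unfolding centralizer_def using SU3_conj_eq_iff_commute by blast
  qed
qed

lemma is_maximal_torus_diag_torus: "is_maximal_torus diag_torus"
  unfolding is_maximal_torus_def
proof (intro conjI allI impI is_torus_diag_torus)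
  fix S assume S: "is_torus S \<and> diag_torus \<subseteq> S"
  define d :: "3 \<Rightarrow> complex" where
    "d i = (if i = 1 then \<i> else if i = 2 then - \<i> else 1)" for i
  have "inj d"
    by (auto simp: inj_def forall_3 d_def complex_eq_iff)
  have "diag3 d \<in> diag_torus"
    by (simp add: diag_torus_def diag3_in_SU3_iff forall_3 d_def)
  have "S \<subseteq> centralizer (diag3 d)"
  proof
    fix s assume "s \<in> S"
    with S \<open>diag3 d \<in> diag_torus\<close> have "s \<in> SU3" "s ** diag3 d = diag3 d ** s"
      by (auto simp: is_torus_def)
    then show "s \<in> centralizer (diag3 d)"
      unfolding centralizer_def using SU3_conj_eq_iff_commute by blast
  qed
  with S show "S = diag_torus"
    by (auto simp: centralizer_diag3 [OF \<open>inj d\<close>])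
qed

section \<open>Eigenvalues and traces\<close>

lemma charpoly3: "\<exists>c. \<forall>z. det (mat z - A) = z ^ 3 - trace A * z\<^sup>2 + c * z - det A"
  for A :: cmat3
proof (intro exI allI)
  fix z
  show "det (mat z - A) = z ^ 3 - trace A * z\<^sup>2 +
      (A$1$1 * A$2$2 - A$1$2 * A$2$1 + A$1$1 * A$3$3 - A$1$3 * A$3$1
        + A$2$2 * A$3$3 - A$2$3 * A$3$2) * z - det A"
    by (simp add: det_3 trace_def sum_3 mat_def algebra_simps power2_eq_square power3_eq_cube)
qed

lemma complex_cubic_factorization:
  fixes t c d :: complex
  obtains l1 l2 l3 where "\<And>z. z ^ 3 - t * z\<^sup>2 + c * z - d = (z - l1) * (z - l2) * (z - l3)"
    and "t = l1 + l2 + l3" and "d = l1 * l2 * l3"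
proof -
  obtain l1 where root: "l1 ^ 3 - t * l1\<^sup>2 + c * l1 - d = 0"
  proof -
    have "\<exists>z. poly [:- d, c, - t, 1:] z = 0"
      by (rule fundamental_theorem_of_algebra_alt) simp
    then show ?thesis
      using that by (auto simp: algebra_simps power2_eq_square power3_eq_cube)
  qed
  \<comment> \<open>l2 and l3 are the roots of the cofactor z^2 + b * z + e of z - l1\<close>
  define b where "b = l1 - t"
  define e where "e = c + l1 * b"
  define s where "s = csqrt (b\<^sup>2 - 4 * e)"
  define l2 where "l2 = (- b + s) / 2"
  define l3 where "l3 = (- b - s) / 2"
  have sum23: "l2 + l3 = - b"
    by (simp add: l2_def l3_def field_simps)
  have "s\<^sup>2 = b\<^sup>2 - 4 * e"
    by (simp add: s_def)
  then have prod23: "l2 * l3 = e"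
    by (simp add: l2_def l3_def field_simps power2_eq_square)
  have d: "d = l1 * e"
    using root by (simp add: e_def b_def algebra_simps power2_eq_square power3_eq_cube)
  show ?thesis
  proof
    fix z
    have "(z - l1) * (z - l2) * (z - l3) = (z - l1) * (z\<^sup>2 - (l2 + l3) * z + l2 * l3)"
      by (simp add: algebra_simps power2_eq_square)
    then show "z ^ 3 - t * z\<^sup>2 + c * z - d = (z - l1) * (z - l2) * (z - l3)"
      by (simp add: sum23 prod23 d e_def b_def algebra_simps power2_eq_square power3_eq_cube)
    show "t = l1 + l2 + l3"
      using sum23 by (simp add: b_def algebra_simps)
    show "d = l1 * l2 * l3"
      using d prod23 by (simp add: algebra_simps)
  qed
qed

definition cinner :: "complex^3 \<Rightarrow> complex^3 \<Rightarrow> complex" where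
  "cinner u w = (\<Sum>i\<in>UNIV. cnj (u $ i) * w $ i)"

lemma cinner_self: "cinner v v = of_real ((norm v)\<^sup>2)"
proof -
  have "cnj z * z = of_real ((cmod z)\<^sup>2)" for z
    by (metis complex_norm_square mult.commute)
  then show ?thesis
    unfolding cinner_def norm_vec_def L2_set_def
    by (simp add: sum_nonneg del: of_real_power flip: of_real_sum)
qed

lemma cinner_mult_left: "cinner (A *v u) w = cinner u (ctrans A *v w)"
  by (simp add: cinner_def matrix_vector_mult_def ctrans_def sum_3 algebra_simps)

lemma unitary_eigenvalue_norm:
  assumes unitary: "ctrans A ** A = mat 1" and root: "det (mat l - A) = 0"
  shows "cmod l = 1"
proof -
  have "\<not> (\<exists>B. B ** (mat l - A) = mat 1)"
    using root invertible_det_nz invertible_left_inverse by blast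
  then obtain v where "v \<noteq> 0" and "(mat l - A) *v v = 0"
    unfolding matrix_left_invertible_ker by blast
  moreover have "mat l *v v = l *s v"
    by (simp add: vec_eq_iff matrix_vector_mult_def mat_def sum_3 forall_3)
  ultimately have eigen: "A *v v = l *s v"
    by (simp add: matrix_vector_mult_diff_rdistrib)
  have "cnj l * l * cinner v v = cinner (A *v v) (A *v v)"
    by (simp add: eigen cinner_def sum_3 algebra_simps)
  also have "\<dots> = cinner v v"
    using unitary by (simp add: cinner_mult_left matrix_vector_mul_assoc)
  finally have "cnj l * l = 1"
    using \<open>v \<noteq> 0\<close> by (simp add: cinner_self)
  then show ?thesis
    by (simp add: cnj_mult_self_eq_1_iff)
qed

lemma trace_SU3_eq_trace_diag_torus: "trace ` SU3 = trace ` diag_torus"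
proof
  show "trace ` SU3 \<subseteq> trace ` diag_torus"
  proof
    fix z assume "z \<in> trace ` SU3"
    then obtain A where A: "A \<in> SU3" and z: "z = trace A"
      by blast
    obtain c where c: "\<forall>w. det (mat w - A) = w ^ 3 - trace A * w\<^sup>2 + c * w - det A"
      using charpoly3 by blast
    obtain l1 l2 l3
      where factor: "\<And>w. w ^ 3 - trace A * w\<^sup>2 + c * w - det A
          = (w - l1) * (w - l2) * (w - l3)"
        and trace: "trace A = l1 + l2 + l3" and det: "det A = l1 * l2 * l3"
      using complex_cubic_factorization [of "trace A" c "det A"] by blast
    have charpoly: "det (mat w - A) = (w - l1) * (w - l2) * (w - l3)" for w
      using c factor by metis
    have unitary: "ctrans A ** A = mat 1"
      using A by (simp add: SU3_def)
    have "cmod l1 = 1" "cmod l2 = 1" "cmod l3 = 1"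
      by (rule unitary_eigenvalue_norm [OF unitary], simp add: charpoly)+
    define l where "l i = (if i = 1 then l1 else if i = 2 then l2 else l3)" for i :: 3
    have "cmod (l i) = 1" for i
      using \<open>cmod l1 = 1\<close> \<open>cmod l2 = 1\<close> \<open>cmod l3 = 1\<close> by (simp add: l_def)
    moreover have "l 1 * l 2 * l 3 = 1"
      using A det by (simp add: l_def SU3_def)
    ultimately have "diag3 l \<in> diag_torus"
      by (simp add: diag_torus_def diag3_in_SU3_iff)
    moreover have "z = trace (diag3 l)"
      by (simp add: z trace trace_diag3 l_def)
    ultimately show "z \<in> trace ` diag_torus"
      by blast
  qed
qed (auto simp: diag_torus_def)

section \<open>Generic diagonal elements\<close>

text \<open>1, x / (2 * pi) and y / (2 * pi) are linearly independent over the rationals,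
  which is the hypothesis of Kronecker's theorem.\<close>
definition independent_angles :: "real \<Rightarrow> real \<Rightarrow> bool" where
  "independent_angles x y \<longleftrightarrow>
     (\<forall>a b c :: int. of_int a * x + of_int b * y = 2 * pi * of_int c \<longrightarrow> a = 0 \<and> b = 0)"

lemma cis_eq_1_imp_int_multiple: "cis t = 1 \<Longrightarrow> \<exists>n::int. t = 2 * pi * of_int n"
  by (auto simp: cis_conv_exp exp_eq_1)

lemma inj_torus_eigenvalues:
  assumes "independent_angles x y"
  shows "inj (\<lambda>i. cis (torus_angles x y i))"
proof (rule injI, rule ccontr)
  fix i j :: 3
  assume eq: "cis (torus_angles x y i) = cis (torus_angles x y j)" and "i \<noteq> j"
  define p :: "3 \<Rightarrow> int" where "p i = (if i = 1 then 1 else if i = 2 then 0 else - 1)" for i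
  define q :: "3 \<Rightarrow> int" where "q i = (if i = 1 then 0 else if i = 2 then 1 else - 1)" for i
  have angle: "torus_angles x y i = of_int (p i) * x + of_int (q i) * y" for i
    using exhaust_3 [of i] by (auto simp: p_def q_def)
  have "p i \<noteq> p j"
    using \<open>i \<noteq> j\<close> exhaust_3 [of i] exhaust_3 [of j] by (auto simp: p_def)
  have "cis (of_int (p i - p j) * x + of_int (q i - q j) * y) = 1"
    using eq by (simp add: angle algebra_simps flip: cis_divide)
  then obtain n :: int where "of_int (p i - p j) * x + of_int (q i - q j) * y = 2 * pi * of_int n"
    using cis_eq_1_imp_int_multiple by blast
  with assms have "p i - p j = 0"
    unfolding independent_angles_def by blast
  with \<open>p i \<noteq> p j\<close> show False
    by simp
qed

lemma independent_angles_distinct: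
  assumes "independent_angles x y"
  shows "x \<noteq> y" "x \<noteq> 2 * pi" "y \<noteq> 2 * pi"
proof -
  have "of_int a * x + of_int b * y \<noteq> 2 * pi * of_int c" if "a \<noteq> 0 \<or> b \<noteq> 0" for a b c :: int
    using assms that by (auto simp: independent_angles_def)
  from this [of 1 "- 1" 0] this [of 1 0 1] this [of 0 1 1]
  show "x \<noteq> y" "x \<noteq> 2 * pi" "y \<noteq> 2 * pi"
    by auto
qed

lemma independent_angles_int_independent:
  assumes "independent_angles x y"
  shows "module.independent (\<lambda>r x. of_int r * x) {x / (2 * pi), y / (2 * pi), 1 :: real}"
    (is "module.independent ?scale ?S")
proof -
  have "module ?scale"
    by (simp add: module.intro distrib_left distrib_right mult.commute)
  moreover have "u v = 0"
    if "finite T" "T \<subseteq> ?S" "(\<Sum>w\<in>T. of_int (u w) * w) = 0" "v \<in> T" for T u v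
  proof -
    define U where "U w = (if w \<in> T then u w else 0)" for w
    have "(\<Sum>w\<in>?S. of_int (U w) * w) = (\<Sum>w\<in>?S. if w \<in> T then of_int (u w) * w else 0)"
      by (rule sum.cong) (simp_all add: U_def)
    also have "\<dots> = (\<Sum>w\<in>?S \<inter> T. of_int (u w) * w)"
      by (rule sum.inter_restrict [symmetric]) simp
    also have "?S \<inter> T = T"
      using \<open>T \<subseteq> ?S\<close> by blast
    finally have "(\<Sum>w\<in>?S. of_int (U w) * w) = (\<Sum>w\<in>T. of_int (u w) * w)" .
    then have lin: "of_int (U (x / (2 * pi))) * (x / (2 * pi))
        + of_int (U (y / (2 * pi))) * (y / (2 * pi)) + of_int (U 1) = 0"
      using independent_angles_distinct [OF assms] that(3) by (simp add: field_simps)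
    then have "of_int (U (x / (2 * pi))) * x + of_int (U (y / (2 * pi))) * y
        = 2 * pi * of_int (- U 1)"
      by (simp add: field_simps)
    with assms have "U (x / (2 * pi)) = 0" "U (y / (2 * pi)) = 0"
      unfolding independent_angles_def by blast+
    moreover from calculation lin have "U 1 = 0"
      by simp
    ultimately show "u v = 0"
      using that(2,4) by (auto simp: U_def)
  qed
  ultimately show ?thesis
    by (simp add: module.independent_explicit_module)
qed

lemma dense_int_multiples_mod_2pi:
  assumes "independent_angles x y"
  shows "closure (range (\<lambda>(k, m, n).
      (of_int k * x - 2 * pi * of_int m, of_int k * y - 2 * pi * of_int n))) = UNIV"
    (is "closure ?orbit = UNIV")
proof -
  define \<theta> :: "nat \<Rightarrow> real" where
    "\<theta> i = (if i = 0 then x / (2 * pi) else if i = 1 then y / (2 * pi) else 1)" for i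
  have "{..2::nat} = {0, 1, 2}"
    by auto
  then have \<theta>_image: "\<theta> ` {..2} = {x / (2 * pi), y / (2 * pi), 1}"
    by (auto simp: \<theta>_def)
  have indep: "module.independent (\<lambda>r x. of_int r * x) (\<theta> ` {..2})"
    unfolding \<theta>_image by (rule independent_angles_int_independent [OF assms])
  have "\<theta> 2 = 1"
    by (simp add: \<theta>_def)
  have "inj_on \<theta> {..2}"
    using independent_angles_distinct [OF assms] \<open>{..2} = {0, 1, 2}\<close>
    by (auto simp: inj_on_def \<theta>_def field_simps)
  have scale: "\<bar>2 * pi * z\<bar> < e / 2" if "\<bar>z\<bar> < e / (4 * pi)" for z e :: real
    using that by (simp add: abs_mult field_simps)
  have "(u, v) \<in> closure ?orbit" for u v
    unfolding closure_approachable
  proof (intro allI impI)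
    fix e :: real assume "e > 0"
    define \<alpha> :: "nat \<Rightarrow> real" where "\<alpha> i = (if i = 0 then u else v) / (2 * pi)" for i
    obtain k m
      where km: "\<And>i. i < 2 \<Longrightarrow> \<bar>of_int k * \<theta> i - of_int (m i) - \<alpha> i\<bar> < e / (4 * pi)"
      using Kronecker_thm_2 [OF indep \<open>inj_on \<theta> {..2}\<close> \<open>\<theta> 2 = 1\<close>, of "e / (4 * pi)" \<alpha>]
        \<open>e > 0\<close>
      by auto
    define p where
      "p = (of_int k * x - 2 * pi * of_int (m 0), of_int k * y - 2 * pi * of_int (m 1))"
    have "fst p - u = 2 * pi * (of_int k * \<theta> 0 - of_int (m 0) - \<alpha> 0)"
      and "snd p - v = 2 * pi * (of_int k * \<theta> 1 - of_int (m 1) - \<alpha> 1)"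
      by (simp_all add: p_def \<theta>_def \<alpha>_def field_simps)
    then have "\<bar>fst p - u\<bar> < e / 2" "\<bar>snd p - v\<bar> < e / 2"
      using scale km [of 0] km [of 1] by simp_all
    moreover have "dist p (u, v) = sqrt ((fst p - u)\<^sup>2 + (snd p - v)\<^sup>2)"
      by (simp add: p_def dist_Pair_Pair dist_real_def)
    ultimately have "dist p (u, v) < e"
      using sqrt_sum_squares_le_sum_abs [of "fst p - u" "snd p - v"] by linarith
    moreover have "p \<in> ?orbit"
      unfolding p_def by (rule image_eqI [where x = "(k, m 0, m 1)"]) auto
    ultimately show "\<exists>p\<in>?orbit. dist p (u, v) < e"
      by blast
  qed
  then show ?thesis
    by auto
qed

lemma mpow_torus_elem: "mpow (torus_elem x y) n = torus_elem (of_nat n * x) (of_nat n * y)"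
proof (induction n)
  case 0
  show ?case
    by (simp add: mpow_def torus_elem_zero)
next
  case (Suc n)
  have "mpow (torus_elem x y) (Suc n) = torus_elem x y ** mpow (torus_elem x y) n"
    by (simp add: mpow_def)
  then show ?case
    by (simp add: Suc.IH torus_elem_mult algebra_simps)
qed

lemma torus_elem_int_mult_in_cyclic_gen:
  "torus_elem (of_int k * x) (of_int k * y) \<in> cyclic_gen (torus_elem x y)"
proof (cases "k \<ge> 0")
  case True
  then have "torus_elem (of_int k * x) (of_int k * y) = mpow (torus_elem x y) (nat k)"
    by (simp add: mpow_torus_elem)
  then show ?thesis
    by (simp add: cyclic_gen_def)
next
  case False
  then have "torus_elem (of_int k * x) (of_int k * y) = mpow (ctrans (torus_elem x y)) (nat (- k))"
    by (simp add: mpow_torus_elem ctrans_torus_elem)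
  then show ?thesis
    by (simp add: cyclic_gen_def)
qed

lemma diag_torus_subset_closure_cyclic_gen:
  assumes "independent_angles x y"
  shows "diag_torus \<subseteq> closure (cyclic_gen (torus_elem x y))"
proof -
  let ?orbit = "range (\<lambda>(k, m, n).
      (of_int k * x - 2 * pi * of_int m, of_int k * y - 2 * pi * of_int n))"
  have orbit: "(\<lambda>(x, y). torus_elem x y) ` ?orbit \<subseteq> cyclic_gen (torus_elem x y)"
  proof clarify
    fix k m n :: int
    have "torus_elem (of_int k * x - 2 * pi * of_int m) (of_int k * y - 2 * pi * of_int n)
        = torus_elem (of_int k * x) (of_int k * y)"
      using torus_elem_periodic [of "of_int k * x - 2 * pi * of_int m" m
          "of_int k * y - 2 * pi * of_int n" n]
      by simp
    then show "torus_elem (of_int k * x - 2 * pi * of_int m) (of_int k * y - 2 * pi * of_int n)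
        \<in> cyclic_gen (torus_elem x y)"
      by (simp add: torus_elem_int_mult_in_cyclic_gen)
  qed
  have "(\<lambda>(x, y). torus_elem x y) ` closure ?orbit \<subseteq> closure (cyclic_gen (torus_elem x y))"
  proof (rule image_closure_subset)
    show "continuous_on (closure ?orbit) (\<lambda>(x, y). torus_elem x y)"
      using continuous_on_torus_elem by (rule continuous_on_subset) simp
    show "(\<lambda>(x, y). torus_elem x y) ` ?orbit \<subseteq> closure (cyclic_gen (torus_elem x y))"
      using orbit closure_subset by blast
  qed simp
  then show ?thesis
    by (simp add: dense_int_multiples_mod_2pi [OF assms] range_torus_elem)
qed

lemma generic_torus_elem:
  assumes "independent_angles x y"
  shows "generic (torus_elem x y)"
proof -
  have "centralizer (torus_elem x y) = diag_torus"
    unfolding torus_elem_def by (rule centralizer_diag3 [OF inj_torus_eigenvalues [OF assms]])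
  then show ?thesis
    using torus_elem_in_diag_torus is_maximal_torus_diag_torus
      diag_torus_subset_closure_cyclic_gen [OF assms]
    by (simp add: generic_def regular_def diag_torus_def)
qed

section \<open>The exceptional traces form a null set\<close>

lemma negligible_dependent_angles: "negligible {(x, y). \<not> independent_angles x y}"
proof -
  let ?line = "\<lambda>(a, b, c). {p :: real \<times> real. (of_int a, of_int b) \<bullet> p = 2 * pi * of_int c}"
  let ?I = "{(a :: int, b :: int, c :: int). a \<noteq> 0 \<or> b \<noteq> 0}"
  have "negligible (\<Union> (?line ` ?I))"
  proof (rule negligible_countable_Union)
    show "countable (?line ` ?I)"
      by (rule countable_image, rule countable_subset [OF subset_UNIV]) simp
    fix L assume "L \<in> ?line ` ?I"
    then obtain a b c :: int where "a \<noteq> 0 \<or> b \<noteq> 0" and L: "L = ?line (a, b, c)"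
      by auto
    then have "(of_int a, of_int b) \<noteq> (0 :: real \<times> real)"
      by (auto simp: zero_prod_def)
    then show "negligible L"
      unfolding L by (simp add: negligible_hyperplane)
  qed
  moreover have "{(x, y). \<not> independent_angles x y} \<subseteq> \<Union> (?line ` ?I)"
  proof clarify
    fix x y assume "\<not> independent_angles x y"
    then obtain a b c :: int
      where "of_int a * x + of_int b * y = 2 * pi * of_int c" and "a \<noteq> 0 \<or> b \<noteq> 0"
      by (auto simp: independent_angles_def)
    then show "(x, y) \<in> \<Union> (?line ` ?I)"
      by (auto simp: inner_Pair intro!: bexI [where x = "(a, b, c)"])
  qed
  ultimately show ?thesis
    by (rule negligible_subset)
qed

lemma negligible_trace_torus_elem_image:
  assumes "negligible S"
  shows "negligible ((\<lambda>(x, y). trace (torus_elem x y)) ` S)"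
proof (rule negligible_differentiable_image_negligible [OF _ assms])
  have "(\<lambda>(x, y). cis x + cis y + cis (- (x + y))) differentiable_on UNIV"
    unfolding case_prod_beta differentiable_on_def differentiable_def
    by (intro ballI exI) (rule derivative_intros)+
  then show "(\<lambda>(x, y). trace (torus_elem x y)) differentiable_on S"
    unfolding trace_torus_elem by (rule differentiable_on_subset) simp
qed simp

theorem proposition6p3:
  shows "trace ` SU3 - trace ` {a \<in> SU3. generic a} \<in> null_sets lebesgue"
proof -
  let ?exceptional = "(\<lambda>(x, y). trace (torus_elem x y)) ` {(x, y). \<not> independent_angles x y}"
  have "negligible ?exceptional"
    by (rule negligible_trace_torus_elem_image [OF negligible_dependent_angles])
  moreover have "trace ` SU3 - trace ` {a \<in> SU3. generic a} \<subseteq> ?exceptional"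
  proof
    fix z assume z: "z \<in> trace ` SU3 - trace ` {a \<in> SU3. generic a}"
    then obtain x y where xy: "z = trace (torus_elem x y)"
      unfolding trace_SU3_eq_trace_diag_torus range_torus_elem [symmetric] by auto
    have "\<not> independent_angles x y"
      using z xy generic_torus_elem torus_elem_in_diag_torus by (auto simp: diag_torus_def)
    with xy show "z \<in> ?exceptional"
      by auto
  qed
  ultimately have "negligible (trace ` SU3 - trace ` {a \<in> SU3. generic a})"
    by (rule negligible_subset)
  then show ?thesis
    by (simp add: negligible_iff_null_sets)
qed

end
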